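(* Let $(D_n)_{n\geq1}$ be a sequence of non-empty finite sets of non-negative real numbers. Let $\ell_n=\min D_n$, $u_n=\max D_n$, $\Delta_n=u_n-\ell_n$, and let $\delta_n$ be the largest gap between consecutive elements of $D_n$ (with $\delta_n=0$ if $|D_n|=1$). Suppose $(u_n)$ is bounded, $\beta>1$, and for every $n\geq1$, $$\delta_n\leq\sum_{i=1}^{\infty}\Delta_{n+i}\,\beta^{-i}.$$ Then $$\Big\{\sum_{n=1}^\infty a_n\beta^{-n} : a_n\in D_n \text{ for all } n\Big\}=\Big[\sum_{n=1}^\infty \ell_n\beta^{-n},\ \sum_{n=1}^\infty u_n\beta^{-n}\Big].$$ *)

theory Defs
  imports "HOL-Analysis.Analysis"
begin

definition max_gap :: "real set \<Rightarrow> real" where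
  "max_gap D = (if card D \<le> 1 then 0 else
     Max {y - x | x y. x \<in> D \<and> y \<in> D \<and> x < y \<and> \<not> (\<exists>z\<in>D. x < z \<and> z < y)})"

end

theory Submission
  imports Defs
begin

text \<open>Let \<open>L n\<close> and \<open>U n\<close> be the tails \<open>\<Sum>i\<ge>1. \<ell>(n+i) \<beta>^-i\<close> and \<open>\<Sum>i\<ge>1. u(n+i) \<beta>^-i\<close> of the
  two extremal expansions, so that \<open>\<beta> L n = \<ell>(n+1) + L (n+1)\<close>, and likewise for \<open>U\<close>.
  Every expansion lies in \<open>[L 0, U 0]\<close> by termwise comparison. Conversely, if \<open>r \<in> [L n, U n]\<close>,
  the digits \<open>a\<close> keeping \<open>\<beta> r - a\<close> in \<open>[L (n+1), U (n+1)]\<close> are the points of \<open>D (n+1)\<close> in an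
  interval of length \<open>U (n+1) - L (n+1) \<ge> \<delta>(n+1)\<close> that reaches above \<open>\<ell>(n+1)\<close> and below
  \<open>u(n+1)\<close>; such an interval cannot fall into a gap of \<open>D (n+1)\<close>. Choosing digits this way
  keeps the remainders \<open>\<beta>^n (x - partial sum)\<close> in \<open>[L n, U n]\<close>, hence bounded, so the partial
  sums converge to \<open>x\<close>.\<close>

text \<open>The value \<open>\<Sum>n\<ge>1. a n \<beta>^-n\<close> of a digit sequence; \<open>a 0\<close> is ignored.\<close>
definition beta_value :: "real \<Rightarrow> (nat \<Rightarrow> real) \<Rightarrow> real" where
  "beta_value \<beta> a = (\<Sum>n. a (Suc n) / \<beta> ^ Suc n)"

lemma beta_weights_sums:
  fixes \<beta> :: real
  assumes "\<beta> > 1"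
  shows "(\<lambda>n. 1 / \<beta> ^ Suc n) sums (1 / (\<beta> - 1))"
proof -
  have "(\<lambda>n. 1/\<beta> * (1/\<beta>) ^ n) sums (1/\<beta> * (1 / (1 - 1/\<beta>)))"
    by (intro sums_mult geometric_sums) (use assms in auto)
  moreover have "1/\<beta> * (1 / (1 - 1/\<beta>)) = 1 / (\<beta> - 1)"
    using assms by (simp add: field_simps)
  ultimately show ?thesis
    by (simp add: power_divide)
qed

lemma
  fixes \<beta> B :: real
  assumes "\<beta> > 1" and bound: "\<And>n. n \<ge> 1 \<Longrightarrow> \<bar>a n\<bar> \<le> B"
  shows summable_beta_value: "summable (\<lambda>n. a (Suc n) / \<beta> ^ Suc n)"
    and abs_beta_value_le: "\<bar>beta_value \<beta> a\<bar> \<le> B / (\<beta> - 1)"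
proof -
  have weights: "(\<lambda>n. B * (1 / \<beta> ^ Suc n)) sums (B * (1 / (\<beta> - 1)))"
    by (intro sums_mult beta_weights_sums assms)
  have term_le: "norm (a (Suc n) / \<beta> ^ Suc n) \<le> B * (1 / \<beta> ^ Suc n)" for n
    using bound[of "Suc n"] assms(1) by (simp add: abs_divide divide_right_mono)
  show summable: "summable (\<lambda>n. a (Suc n) / \<beta> ^ Suc n)"
    by (rule summable_comparison_test'[OF sums_summable[OF weights] term_le])
  have norm_summable: "summable (\<lambda>n. norm (a (Suc n) / \<beta> ^ Suc n))"
    by (rule summable_comparison_test'[OF sums_summable[OF weights]]) (use term_le in simp)
  have "norm (beta_value \<beta> a) \<le> (\<Sum>n. norm (a (Suc n) / \<beta> ^ Suc n))"
    unfolding beta_value_def by (rule summable_norm[OF norm_summable])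
  also have "\<dots> \<le> (\<Sum>n. B * (1 / \<beta> ^ Suc n))"
    by (rule suminf_le[OF term_le norm_summable sums_summable[OF weights]])
  finally have "norm (beta_value \<beta> a) \<le> (\<Sum>n. B * (1 / \<beta> ^ Suc n))" .
  then show "\<bar>beta_value \<beta> a\<bar> \<le> B / (\<beta> - 1)"
    using sums_unique[OF weights] by simp
qed

lemma beta_value_mono:
  fixes \<beta> :: real
  assumes "\<beta> > 0" "\<And>n. n \<ge> 1 \<Longrightarrow> a n \<le> b n"
    and "summable (\<lambda>n. a (Suc n) / \<beta> ^ Suc n)" "summable (\<lambda>n. b (Suc n) / \<beta> ^ Suc n)"
  shows "beta_value \<beta> a \<le> beta_value \<beta> b"
  unfolding beta_value_def by (intro suminf_le) (use assms in \<open>auto intro: divide_right_mono\<close>)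

lemma beta_value_diff:
  assumes "summable (\<lambda>n. a (Suc n) / \<beta> ^ Suc n)" "summable (\<lambda>n. b (Suc n) / \<beta> ^ Suc n)"
  shows "beta_value \<beta> (\<lambda>n. a n - b n) = beta_value \<beta> a - beta_value \<beta> b"
  unfolding beta_value_def diff_divide_distrib by (rule suminf_diff[OF assms, symmetric])

lemma beta_value_Suc:
  fixes \<beta> :: real
  assumes "\<beta> \<noteq> 0" and summable: "summable (\<lambda>n. a (Suc n) / \<beta> ^ Suc n)"
  shows "beta_value \<beta> a = (a 1 + beta_value \<beta> (\<lambda>n. a (Suc n))) / \<beta>"
proof -
  have tail: "(\<lambda>n. a (Suc (Suc n)) / \<beta> ^ Suc (Suc n)) = (\<lambda>n. a (Suc (Suc n)) / \<beta> ^ Suc n / \<beta>)"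
    by (simp add: mult.commute)
  have "summable (\<lambda>n. a (Suc (Suc n)) / \<beta> ^ Suc n / \<beta>)"
    using summable_Suc_iff[where f="\<lambda>n. a (Suc n) / \<beta> ^ Suc n", THEN iffD2, OF summable]
    unfolding tail .
  then have "(\<Sum>n. a (Suc (Suc n)) / \<beta> ^ Suc (Suc n)) = beta_value \<beta> (\<lambda>n. a (Suc n)) / \<beta>"
    unfolding tail beta_value_def using assms(1) summable_divide_iff suminf_divide by metis
  moreover have "(\<Sum>n. a (Suc (Suc n)) / \<beta> ^ Suc (Suc n)) = beta_value \<beta> a - a 1 / \<beta>"
    unfolding beta_value_def using suminf_split_head[OF summable] by simp
  ultimately show ?thesis
    using assms(1) by (simp add: field_simps)
qed
lemma consecutive_diff_le_max_gap:
  assumes "finite D" "x \<in> D" "y \<in> D" "x < y" "\<not> (\<exists>z\<in>D. x < z \<and> z < y)"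
  shows "y - x \<le> max_gap D"
proof -
  define G where "G = {y - x | x y. x \<in> D \<and> y \<in> D \<and> x < y \<and> \<not> (\<exists>z\<in>D. x < z \<and> z < y)}"
  have "G \<subseteq> (\<lambda>(x, y). y - x) ` (D \<times> D)"
    unfolding G_def by auto
  then have "finite G"
    using assms(1) by (meson finite_SigmaI finite_imageI finite_subset)
  moreover have "y - x \<in> G"
    unfolding G_def using assms by blast
  moreover have "\<not> card D \<le> 1"
    using card_mono[OF assms(1), of "{x, y}"] assms(2-4) by auto
  ultimately show ?thesis
    unfolding max_gap_def G_def[symmetric] by simp
qed

lemma max_gap_meets_interval:
  fixes D :: "real set"
  assumes "finite D" "D \<noteq> {}" "Min D \<le> y" "y - w \<le> Max D" "max_gap D \<le> w"
  shows "\<exists>a\<in>D. y - w \<le> a \<and> a \<le> y"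
proof -
  define below where "below = {d \<in> D. d \<le> y}"
  have "Min D \<in> below"
    using assms(1-3) by (simp add: below_def)
  then have "finite below" "below \<noteq> {}"
    using assms(1) by (auto simp: below_def)
  define a where "a = Max below"
  have a: "a \<in> D" "a \<le> y" "\<And>d. d \<in> D \<Longrightarrow> d \<le> y \<Longrightarrow> d \<le> a"
    using Max_in[OF \<open>finite below\<close> \<open>below \<noteq> {}\<close>] \<open>finite below\<close>
    by (auto simp: a_def below_def)
  have "y - w \<le> a"
  proof (rule ccontr)
    assume "\<not> y - w \<le> a"
    then have "Max D \<notin> below"
      using a(3)[of "Max D"] assms(4) by (auto simp: below_def)
    then have above_ne: "{d \<in> D. y < d} \<noteq> {}"
      using Max_in[OF assms(1,2)] by (auto simp: below_def)
    define b where "b = Min {d \<in> D. y < d}"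
    have b: "b \<in> D" "y < b" "\<And>d. d \<in> D \<Longrightarrow> y < d \<Longrightarrow> b \<le> d"
      using Min_in[OF _ above_ne] assms(1) by (auto simp: b_def)
    have "\<not> (\<exists>z\<in>D. a < z \<and> z < b)"
      using a(3) b(3) by (meson not_le)
    then have "b - a \<le> max_gap D"
      using consecutive_diff_le_max_gap[OF assms(1) a(1) b(1)] a(2) b(2) by simp
    then show False
      using \<open>\<not> y - w \<le> a\<close> b(2) assms(5) by linarith
  qed
  then show ?thesis
    using a(1,2) by blast
qed

lemma beta_expansion_from_invariant:
  fixes \<beta> C x :: real and D :: "nat \<Rightarrow> real set" and P :: "nat \<Rightarrow> real \<Rightarrow> bool"
  assumes "\<beta> > 1" "P 0 x"
    and step: "\<And>n r. P n r \<Longrightarrow> \<exists>a\<in>D (Suc n). P (Suc n) (\<beta> * r - a)"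
    and bounded: "\<And>n r. P n r \<Longrightarrow> \<bar>r\<bar> \<le> C"
  shows "\<exists>a. (\<forall>n\<ge>1. a n \<in> D n) \<and> beta_value \<beta> a = x"
proof -
  define digit where "digit n r = (SOME a. a \<in> D (Suc n) \<and> P (Suc n) (\<beta> * r - a))" for n r
  have digit: "digit n r \<in> D (Suc n) \<and> P (Suc n) (\<beta> * r - digit n r)" if "P n r" for n r
    unfolding digit_def by (rule someI_ex) (use step[OF that] in blast)
  \<comment> \<open>\<open>R n = \<beta>^n (x - \<Sum>k=1..n. a k \<beta>^-k)\<close>, the remainder after \<open>n\<close> digits\<close>
  define R where "R = rec_nat x (\<lambda>n r. \<beta> * r - digit n r)"
  have R_0: "R 0 = x" and R_Suc: "R (Suc n) = \<beta> * R n - digit n (R n)" for n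
    by (simp_all add: R_def)
  have P_R: "P n (R n)" for n
    by (induction n) (use assms(2) digit in \<open>auto simp: R_0 R_Suc\<close>)
  define a where "a n = digit (n - 1) (R (n - 1))" for n
  have a_Suc: "a (Suc n) = digit n (R n)" for n
    by (simp add: a_def)
  have a_in_D: "\<forall>n\<ge>1. a n \<in> D n"
  proof (intro allI impI)
    fix n :: nat
    assume "n \<ge> 1"
    then obtain m where "n = Suc m"
      using Suc_le_D by auto
    then show "a n \<in> D n"
      using digit[OF P_R[of m]] by (simp add: a_Suc)
  qed
  have partial_sum: "(\<Sum>k<n. a (Suc k) / \<beta> ^ Suc k) = x - R n / \<beta> ^ n" for n
  proof (induction n)
    case 0
    then show ?case by (simp add: R_0)
  next
    case (Suc n)
    have "R (Suc n) / \<beta> ^ Suc n = R n / \<beta> ^ n - a (Suc n) / \<beta> ^ Suc n"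
      using assms(1) by (simp add: R_Suc a_Suc field_simps)
    then show ?case
      using Suc by simp
  qed
  have remainder_bound: "norm (R n / \<beta> ^ n) \<le> C * (1 / \<beta>) ^ n" for n
    using bounded[OF P_R[of n]] assms(1)
    by (simp add: abs_divide power_divide divide_right_mono)
  have "(\<lambda>n. R n / \<beta> ^ n) \<longlonglongrightarrow> 0"
  proof (rule Lim_null_comparison)
    show "\<forall>\<^sub>F n in sequentially. norm (R n / \<beta> ^ n) \<le> C * (1 / \<beta>) ^ n"
      using remainder_bound by (intro always_eventually allI)
    show "(\<lambda>n. C * (1 / \<beta>) ^ n) \<longlonglongrightarrow> 0"
      by (intro tendsto_mult_right_zero LIMSEQ_power_zero) (use assms(1) in auto)
  qed
  then have "(\<lambda>n. x - R n / \<beta> ^ n) \<longlonglongrightarrow> x - 0"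
    by (intro tendsto_diff tendsto_const)
  then have "(\<lambda>k. a (Suc k) / \<beta> ^ Suc k) sums x"
    unfolding sums_def partial_sum by simp
  then have "beta_value \<beta> a = x"
    unfolding beta_value_def by (rule sums_unique[symmetric])
  with a_in_D show ?thesis
    by blast
qed

locale digit_sets =
  fixes D :: "nat \<Rightarrow> real set" and \<beta> B :: real
  assumes finite_D: "\<And>n. n \<ge> 1 \<Longrightarrow> finite (D n)"
    and D_nonempty: "\<And>n. n \<ge> 1 \<Longrightarrow> D n \<noteq> {}"
    and abs_D_le: "\<And>n x. n \<ge> 1 \<Longrightarrow> x \<in> D n \<Longrightarrow> \<bar>x\<bar> \<le> B"
    and beta_gt_1: "\<beta> > 1"
    and max_gap_le: "\<And>n. n \<ge> 1 \<Longrightarrow>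
      max_gap (D n) \<le> beta_value \<beta> (\<lambda>i. Max (D (n + i)) - Min (D (n + i)))"
begin

definition lower_tail :: "nat \<Rightarrow> real" where
  "lower_tail n = beta_value \<beta> (\<lambda>i. Min (D (n + i)))"

definition upper_tail :: "nat \<Rightarrow> real" where
  "upper_tail n = beta_value \<beta> (\<lambda>i. Max (D (n + i)))"

lemma Min_D_in: "n \<ge> 1 \<Longrightarrow> Min (D n) \<in> D n"
  and Max_D_in: "n \<ge> 1 \<Longrightarrow> Max (D n) \<in> D n"
  using finite_D D_nonempty by simp_all

lemma abs_Min_D_le: "n \<ge> 1 \<Longrightarrow> \<bar>Min (D n)\<bar> \<le> B"
  and abs_Max_D_le: "n \<ge> 1 \<Longrightarrow> \<bar>Max (D n)\<bar> \<le> B"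
  by (simp_all add: abs_D_le Min_D_in Max_D_in)

lemma summable_Min_tail: "summable (\<lambda>i. Min (D (m + Suc i)) / \<beta> ^ Suc i)"
  and summable_Max_tail: "summable (\<lambda>i. Max (D (m + Suc i)) / \<beta> ^ Suc i)"
  by (rule summable_beta_value[OF beta_gt_1, of "\<lambda>i. Min (D (m + i))" B]
         summable_beta_value[OF beta_gt_1, of "\<lambda>i. Max (D (m + i))" B];
      simp add: abs_Min_D_le abs_Max_D_le)+

lemma abs_lower_tail_le: "\<bar>lower_tail n\<bar> \<le> B / (\<beta> - 1)"
  and abs_upper_tail_le: "\<bar>upper_tail n\<bar> \<le> B / (\<beta> - 1)"
  unfolding lower_tail_def upper_tail_def
  by (rule abs_beta_value_le[OF beta_gt_1]; simp add: abs_Min_D_le abs_Max_D_le)+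

lemma lower_tail_Suc: "lower_tail n = (Min (D (Suc n)) + lower_tail (Suc n)) / \<beta>"
  and upper_tail_Suc: "upper_tail n = (Max (D (Suc n)) + upper_tail (Suc n)) / \<beta>"
  unfolding lower_tail_def upper_tail_def
  using beta_value_Suc[of \<beta> "\<lambda>i. Min (D (n + i))", OF _ summable_Min_tail]
    beta_value_Suc[of \<beta> "\<lambda>i. Max (D (n + i))", OF _ summable_Max_tail] beta_gt_1
  by simp_all

lemma max_gap_le_tail_diff: "n \<ge> 1 \<Longrightarrow> max_gap (D n) \<le> upper_tail n - lower_tail n"
  using max_gap_le beta_value_diff[OF summable_Max_tail summable_Min_tail]
  unfolding lower_tail_def upper_tail_def by simp

lemma digit_step:
  assumes "lower_tail n \<le> r" "r \<le> upper_tail n"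
  shows "\<exists>a\<in>D (Suc n). lower_tail (Suc n) \<le> \<beta> * r - a \<and> \<beta> * r - a \<le> upper_tail (Suc n)"
proof -
  let ?y = "\<beta> * r - lower_tail (Suc n)" and ?w = "upper_tail (Suc n) - lower_tail (Suc n)"
  have "Min (D (Suc n)) \<le> ?y"
    using assms(1) lower_tail_Suc[of n] beta_gt_1 by (simp add: field_simps)
  moreover have "?y - ?w \<le> Max (D (Suc n))"
    using assms(2) upper_tail_Suc[of n] beta_gt_1 by (simp add: field_simps)
  ultimately have "\<exists>a\<in>D (Suc n). ?y - ?w \<le> a \<and> a \<le> ?y"
    by (intro max_gap_meets_interval) (simp_all add: finite_D D_nonempty max_gap_le_tail_diff)
  then obtain a where "a \<in> D (Suc n)" "?y - ?w \<le> a" "a \<le> ?y"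
    by blast
  then show ?thesis
    by (intro bexI[of _ a]) simp_all
qed

lemma expansion_in_interval:
  assumes "\<forall>n\<ge>1. a n \<in> D n"
  shows "beta_value \<beta> a \<in> {lower_tail 0 .. upper_tail 0}"
proof -
  have "summable (\<lambda>n. a (Suc n) / \<beta> ^ Suc n)"
    using assms by (intro summable_beta_value[OF beta_gt_1, of _ B]) (simp add: abs_D_le)
  moreover have "Min (D n) \<le> a n" "a n \<le> Max (D n)" if "n \<ge> 1" for n
    using assms finite_D[OF that] that by simp_all
  ultimately show ?thesis
    unfolding lower_tail_def upper_tail_def
    using summable_Min_tail[of 0] summable_Max_tail[of 0] beta_gt_1
    by (auto intro: beta_value_mono)
qed

lemma interval_has_expansion:
  assumes "x \<in> {lower_tail 0 .. upper_tail 0}"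
  shows "\<exists>a. (\<forall>n\<ge>1. a n \<in> D n) \<and> beta_value \<beta> a = x"
proof (rule beta_expansion_from_invariant[OF beta_gt_1])
  show "lower_tail 0 \<le> x \<and> x \<le> upper_tail 0"
    using assms by simp
  show "\<exists>a\<in>D (Suc n). lower_tail (Suc n) \<le> \<beta> * r - a \<and> \<beta> * r - a \<le> upper_tail (Suc n)"
    if "lower_tail n \<le> r \<and> r \<le> upper_tail n" for n r
    using digit_step that by blast
  show "\<bar>r\<bar> \<le> B / (\<beta> - 1)" if "lower_tail n \<le> r \<and> r \<le> upper_tail n" for n r
    using that abs_lower_tail_le[of n] abs_upper_tail_le[of n] by linarith
qed

theorem expansions_eq_interval:
  "{beta_value \<beta> a | a. \<forall>n\<ge>1. a n \<in> D n}
    = {beta_value \<beta> (\<lambda>n. Min (D n)) .. beta_value \<beta> (\<lambda>n. Max (D n))}"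
  using expansion_in_interval interval_has_expansion
  unfolding lower_tail_def upper_tail_def by (auto, metis)

end

theorem lemma2p1:
  fixes D :: "nat \<Rightarrow> real set" and \<beta> :: real
  assumes fin: "\<And>n. n \<ge> 1 \<Longrightarrow> finite (D n)"
    and ne: "\<And>n. n \<ge> 1 \<Longrightarrow> D n \<noteq> {}"
    and nonneg: "\<And>n x. n \<ge> 1 \<Longrightarrow> x \<in> D n \<Longrightarrow> 0 \<le> x"
    and bdd: "bdd_above ((\<lambda>n. Max (D n)) ` {1..})"
    and beta: "\<beta> > 1"
    and gap: "\<And>n. n \<ge> 1 \<Longrightarrow>
      max_gap (D n) \<le> (\<Sum>i. (Max (D (n + Suc i)) - Min (D (n + Suc i))) / \<beta> ^ Suc i)"
  shows "{(\<Sum>n. a (Suc n) / \<beta> ^ Suc n) | a. \<forall>n\<ge>1. a n \<in> D n}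
       = {(\<Sum>n. Min (D (Suc n)) / \<beta> ^ Suc n) .. (\<Sum>n. Max (D (Suc n)) / \<beta> ^ Suc n)}"
proof -
  obtain B where B: "\<And>n. n \<ge> 1 \<Longrightarrow> Max (D n) \<le> B"
    using bdd by (auto simp: bdd_above_def)
  have "\<bar>x\<bar> \<le> B" if "n \<ge> 1" "x \<in> D n" for n x
    using nonneg[OF that] B[OF that(1)] Max_ge[OF fin[OF that(1)] that(2)] by simp
  then interpret digit_sets D \<beta> B
    using fin ne beta gap by unfold_locales (simp_all add: beta_value_def)
  from expansions_eq_interval show ?thesis
    unfolding beta_value_def .
qed

end
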